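(* Let $p\neq q$ be primes and $m,n$ positive integers. Then the quotient $Q(x)=\mathrm P_{\langle p^m,q^n\rangle}(x)/\Phi_{p^mq^n}(x)$ is a monic polynomial in $\mathbb Z[x]$ with constant coefficient $1$, and its nonzero coefficients alternate between $1$ and $-1$.
   Context: For a numerical semigroup $S$ (submonoid of $(\mathbb N,+)$ with finite complement), $\mathrm P_S(x)=(1-x)\sum_{s\in S}x^s$. $\langle a,b\rangle$ is the submonoid generated by $a,b$. $\Phi_N$ denotes the $N$-th cyclotomic polynomial. *)

theory Defs
  imports "HOL-Computational_Algebra.Computational_Algebra" "HOL-Analysis.Analysis"
begin

definition semigroup_gen :: "nat \<Rightarrow> nat \<Rightarrow> nat set" where
  "semigroup_gen a b = {i * a + j * b | i j. True}"

definition semigroup_poly_fps :: "nat set \<Rightarrow> int fps" where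
  "semigroup_poly_fps S = (1 - fps_X) * Abs_fps (\<lambda>k. if k \<in> S then 1 else 0)"

definition cyclotomic :: "nat \<Rightarrow> complex poly" where
  "cyclotomic N = (\<Prod>k\<in>{k\<in>{1..N}. coprime k N}.
       [:- cis (2 * pi * real k / real N), 1:])"

end

theory Submission
  imports Defs "HOL-Number_Theory.Cong"
begin

text \<open>
  Write \<open>a = p^m\<close>, \<open>b = q^n\<close>, \<open>N = a b\<close>, \<open>k = q^(n-1)\<close>, \<open>l = p^(m-1)\<close>.
  The set \<open>S = \<langle>a,b\<rangle>\<close> is \<open>{j b | j < a} + a\<nat>\<close>, and \<open>{j b | j < a}\<close> is a complete
  residue system modulo \<open>a\<close>, so \<open>(1 - x^a)(1 - x^b) \<Sum>\<^sub>s\<^sub>\<in>\<^sub>S x^s = 1 - x^N\<close>.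
  Likewise \<open>{a i + b j | i < k, j < l}\<close> is a complete residue system modulo \<open>k l\<close>, and for
  \<open>T = {a i + b j | i < k, j < l} + k l \<nat>\<close> one gets
  \<open>(1 - x^(k l))(1 - x^a)(1 - x^b) \<Sum>\<^sub>s\<^sub>\<in>\<^sub>T x^s = (1 - x^(N/q))(1 - x^(N/p))\<close>.
  Sorting the \<open>N\<close>-th roots of unity by divisibility of their exponent by \<open>p\<close> and \<open>q\<close> gives
  \<open>\<Phi>\<^sub>N (1 - x^(N/q))(1 - x^(N/p)) = (1 - x^N)(1 - x^(N/pq))\<close>, and \<open>N/pq = k l\<close>; hence
  \<open>\<Phi>\<^sub>N \<Sum>\<^sub>s\<^sub>\<in>\<^sub>T x^s = \<Sum>\<^sub>s\<^sub>\<in>\<^sub>S x^s\<close>, and the quotient is \<open>Q = (1 - x) \<Sum>\<^sub>s\<^sub>\<in>\<^sub>T x^s\<close>.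
  Since \<open>0 \<in> T\<close> and \<open>T\<close> is cofinite, \<open>Q\<close> is a polynomial whose coefficient at \<open>s\<close> is
  \<open>+1\<close> or \<open>-1\<close> exactly where membership in \<open>T\<close> switches on or off, and such switches alternate.
\<close>

definition indicator_fps :: "nat set \<Rightarrow> 'a :: zero_neq_one fps" where
  "indicator_fps A = Abs_fps (\<lambda>k. if k \<in> A then 1 else 0)"

definition apery_set :: "nat set \<Rightarrow> nat \<Rightarrow> nat set" where
  "apery_set A c = {s \<in> A. \<not> (c \<le> s \<and> s - c \<in> A)}"

definition plus_multiples :: "nat set \<Rightarrow> nat \<Rightarrow> nat set" where
  "plus_multiples B c = {x + c * t | x t. x \<in> B}"

definition bounded_combinations :: "nat \<Rightarrow> nat \<Rightarrow> nat \<Rightarrow> nat \<Rightarrow> nat set" where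
  "bounded_combinations a k b l = (\<lambda>(i, j). a * i + b * j) ` ({..<k} \<times> {..<l})"


subsection \<open>Power series of sets of natural numbers\<close>

lemma fps_one_minus_X_power_mult_nth:
  "((1 - fps_X ^ c) * (f :: 'a :: comm_ring_1 fps)) $ s = f $ s - (if c \<le> s then f $ (s - c) else 0)"
  by (simp add: left_diff_distrib fps_X_power_mult_nth)

lemma one_minus_X_mult_indicator_fps_nth:
  "((1 - fps_X) * indicator_fps A :: 'a :: comm_ring_1 fps) $ s
     = (if s \<in> A then 1 else 0) - (if 0 < s \<and> s - 1 \<in> A then 1 else 0)"
  unfolding fps_one_minus_X_power_mult_nth[of 1, simplified] by (simp add: indicator_fps_def Suc_le_eq)

lemma indicator_fps_eq_sum:
  assumes "finite B"
  shows "(indicator_fps B :: 'a :: comm_ring_1 fps) = (\<Sum>x\<in>B. fps_X ^ x)"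
  by (rule fps_ext) (simp add: indicator_fps_def fps_sum_nth assms)

lemma of_int_one_minus_X_mult_indicator_fps:
  "Abs_fps (\<lambda>s. of_int (((1 - fps_X) * indicator_fps A :: int fps) $ s))
     = (1 - fps_X) * (indicator_fps A :: 'a :: comm_ring_1 fps)"
  by (rule fps_ext) (simp add: one_minus_X_mult_indicator_fps_nth)

lemma fps_of_poly_map_poly_of_int:
  "fps_of_poly (map_poly of_int Q) = Abs_fps (\<lambda>s. of_int (fps_of_poly Q $ s) :: 'a :: comm_ring_1)"
  by (rule fps_ext) (simp add: coeff_map_poly)

lemma one_minus_X_power_mult_indicator_fps:
  assumes "\<And>s. s \<in> A \<Longrightarrow> s + c \<in> A"
  shows "(1 - fps_X ^ c) * (indicator_fps A :: 'a :: comm_ring_1 fps) = indicator_fps (apery_set A c)"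
proof (rule fps_ext)
  fix s
  show "((1 - fps_X ^ c) * indicator_fps A :: 'a fps) $ s = indicator_fps (apery_set A c) $ s"
  proof (cases "c \<le> s \<and> s - c \<in> A")
    case True
    moreover from True have "s \<in> A"
      using assms[of "s - c"] by simp
    ultimately show ?thesis
      by (simp add: fps_one_minus_X_power_mult_nth indicator_fps_def apery_set_def)
  next
    case False
    then show ?thesis
      by (auto simp: fps_one_minus_X_power_mult_nth indicator_fps_def apery_set_def)
  qed
qed

lemma geometric_fps_X_power:
  "(1 - fps_X ^ a) * (\<Sum>j<n. fps_X ^ (a * j)) = (1 - fps_X ^ (a * n) :: 'a :: comm_ring_1 fps)"
  using one_diff_power_eq[of "fps_X ^ a :: 'a fps" n] by (simp add: power_mult)

lemma one_minus_X_power_neq_zero: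
  assumes "a > 0"
  shows "(1 - fps_X ^ a :: 'a :: comm_ring_1 fps) \<noteq> 0"
proof -
  have "(1 - fps_X ^ a :: 'a fps) $ 0 = 1"
    using assms by (simp only: fps_sub_nth fps_X_power_nth fps_one_nth) simp
  then show ?thesis
    by (metis fps_zero_nth zero_neq_one)
qed


subsection \<open>Apery sets of sets of the form \<open>B + c\<nat>\<close>\<close>

lemma plus_multiples_closed:
  assumes "s \<in> plus_multiples B c"
  shows "s + c \<in> plus_multiples B c"
proof -
  obtain x t where "x \<in> B" "s = x + c * t"
    using assms unfolding plus_multiples_def by blast
  then have "x \<in> B \<and> s + c = x + c * Suc t"
    by simp
  then show ?thesis
    unfolding plus_multiples_def by blast
qed

lemma subset_plus_multiples: "B \<subseteq> plus_multiples B c"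
  unfolding plus_multiples_def by force

lemma mem_plus_multiplesI:
  assumes "x \<in> B" "x \<le> s" "x mod c = s mod c"
  shows "s \<in> plus_multiples B c"
proof -
  have "c dvd s - x"
    using assms(2,3) mod_eq_dvd_iff_nat by metis
  then obtain t where "s - x = c * t"
    by blast
  then have "s = x + c * t"
    using assms(2) by simp
  then show ?thesis
    using assms(1) unfolding plus_multiples_def by blast
qed

lemma apery_set_plus_multiples:
  assumes "c > 0" "inj_on (\<lambda>x. x mod c) B"
  shows "apery_set (plus_multiples B c) c = B"
proof (intro equalityI subsetI)
  fix s assume "s \<in> apery_set (plus_multiples B c) c"
  then obtain x t where s: "x \<in> B" "s = x + c * t" "\<not> (c \<le> s \<and> s - c \<in> plus_multiples B c)"
    unfolding apery_set_def plus_multiples_def by blast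
  have "t = 0"
  proof (rule ccontr)
    assume "t \<noteq> 0"
    then have "c \<le> s" "s - c = x + c * (t - 1)"
      using s(2) by (auto simp: diff_mult_distrib2 intro: trans_le_add2)
    then show False
      using s(1,3) unfolding plus_multiples_def by blast
  qed
  then show "s \<in> B"
    using s by simp
next
  fix x assume x: "x \<in> B"
  have "\<not> (c \<le> x \<and> x - c \<in> plus_multiples B c)"
  proof
    assume "c \<le> x \<and> x - c \<in> plus_multiples B c"
    then obtain y t where "y \<in> B" "c \<le> x" "x - c = y + c * t"
      unfolding plus_multiples_def by blast
    then have y: "y \<in> B" "x = y + c * Suc t"
      by simp_all
    moreover have "y mod c = x mod c"
      using y(2) by (metis mod_mult_self2)
    ultimately have "y = x"
      using inj_onD[OF assms(2) _ y(1) x] by simp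
    with y(2) assms(1) show False
      by simp
  qed
  then show "x \<in> apery_set (plus_multiples B c) c"
    using x subset_plus_multiples unfolding apery_set_def by blast
qed

lemma one_minus_X_power_mult_indicator_plus_multiples:
  assumes "c > 0" "finite B" "inj_on (\<lambda>x. x mod c) B"
  shows "(1 - fps_X ^ c) * (indicator_fps (plus_multiples B c) :: 'a :: comm_ring_1 fps)
           = (\<Sum>x\<in>B. fps_X ^ x)"
  by (simp add: one_minus_X_power_mult_indicator_fps plus_multiples_closed
      apery_set_plus_multiples assms indicator_fps_eq_sum)

lemma semigroup_gen_eq_plus_multiples:
  assumes "a > 0"
  shows "semigroup_gen a b = plus_multiples ((\<lambda>j. j * b) ` {..<a}) a"
proof (intro equalityI subsetI)
  fix s assume "s \<in> semigroup_gen a b"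
  then obtain i j where "s = i * a + j * b"
    unfolding semigroup_gen_def by blast
  then have "s = i * a + (j mod a + a * (j div a)) * b"
    by (simp only: mod_mult_div_eq)
  also have "\<dots> = (j mod a) * b + a * (i + (j div a) * b)"
    by (simp only: algebra_simps)
  finally have "s = (j mod a) * b + a * (i + (j div a) * b)" .
  moreover have "j mod a < a"
    using assms by simp
  ultimately show "s \<in> plus_multiples ((\<lambda>j. j * b) ` {..<a}) a"
    unfolding plus_multiples_def by blast
next
  fix s assume "s \<in> plus_multiples ((\<lambda>j. j * b) ` {..<a}) a"
  then obtain j t where "s = j * b + a * t"
    unfolding plus_multiples_def by blast
  then have "s = t * a + j * b"
    by simp
  then show "s \<in> semigroup_gen a b"
    unfolding semigroup_gen_def by blast
qed

lemma inj_on_mult_mod: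
  fixes a b :: nat
  assumes "coprime a b"
  shows "inj_on (\<lambda>j. j * b mod a) {..<a}"
proof (rule inj_onI)
  fix j j' assume "j \<in> {..<a}" "j' \<in> {..<a}" "j * b mod a = j' * b mod a"
  then have "[j = j'] (mod a)"
    using assms by (simp add: cong_def[symmetric] cong_mult_rcancel_nat coprime_commute)
  then show "j = j'"
    using \<open>j \<in> {..<a}\<close> \<open>j' \<in> {..<a}\<close> cong_less_imp_eq_nat by simp
qed

lemma semigroup_gen_generating_fps:
  assumes "a > 0" "b > 0" "coprime a b"
  shows "(1 - fps_X ^ a) * (1 - fps_X ^ b) * (indicator_fps (semigroup_gen a b) :: 'a :: comm_ring_1 fps)
           = 1 - fps_X ^ (a * b)"
proof -
  have inj: "inj_on (\<lambda>j. j * b) {..<a}"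
    using assms(2) by (auto simp: inj_on_def)
  have "inj_on (\<lambda>x. x mod a) ((\<lambda>j. j * b) ` {..<a})"
    using inj_on_mult_mod[OF assms(3)] by (intro inj_on_imageI) (simp add: o_def)
  then have "(1 - fps_X ^ a) * (indicator_fps (semigroup_gen a b) :: 'a fps) = (\<Sum>j<a. fps_X ^ (b * j))"
    using assms(1) by (simp add: semigroup_gen_eq_plus_multiples one_minus_X_power_mult_indicator_plus_multiples
        sum.reindex[OF inj] mult.commute)
  then show ?thesis
    using geometric_fps_X_power[of b a] by (metis mult.assoc mult.commute)
qed

lemma bounded_combination_mod_cancel:
  fixes a b k l :: nat
  assumes "coprime a k" "k dvd b" "i < k" "i' < k"
    and "(a * i + b * j) mod (k * l) = (a * i' + b * j') mod (k * l)"
  shows "i = i'"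
proof -
  have "[a * i + b * j = a * i' + b * j'] (mod k)"
    using assms(5) unfolding cong_def[symmetric] by (rule cong_dvd_modulus_nat) simp
  moreover have "[b * j = 0] (mod k)" "[b * j' = 0] (mod k)"
    using assms(2) by (simp_all add: cong_0_iff)
  ultimately have "[a * i + 0 = a * i' + 0] (mod k)"
    by (meson cong_add cong_refl cong_sym cong_trans)
  then have "[i = i'] (mod k)"
    using assms(1) cong_mult_lcancel_nat by simp
  then show ?thesis
    using assms(3,4) cong_less_imp_eq_nat by blast
qed

lemma inj_on_bounded_combination_mod:
  fixes a b k l :: nat
  assumes "coprime a k" "k dvd b" "coprime b l" "l dvd a"
  shows "inj_on (\<lambda>(i, j). (a * i + b * j) mod (k * l)) ({..<k} \<times> {..<l})"
proof (rule inj_onI, clarify)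
  fix i j i' j'
  assume ij: "i < k" "j < l" "i' < k" "j' < l"
    and eq: "(a * i + b * j) mod (k * l) = (a * i' + b * j') mod (k * l)"
  have "i = i'"
    using bounded_combination_mod_cancel[OF assms(1,2) ij(1,3) eq] .
  moreover have "(b * j + a * i) mod (l * k) = (b * j' + a * i') mod (l * k)"
    using eq by (simp add: ac_simps)
  then have "j = j'"
    using bounded_combination_mod_cancel[OF assms(3,4) ij(2,4)] by blast
  ultimately show "i = i' \<and> j = j'" ..
qed

lemma
  fixes a b k l :: nat
  assumes "coprime a k" "k dvd b" "coprime b l" "l dvd a"
  shows inj_on_bounded_combination: "inj_on (\<lambda>(i, j). a * i + b * j) ({..<k} \<times> {..<l})"
    and inj_on_mod_bounded_combinations: "inj_on (\<lambda>x. x mod (k * l)) (bounded_combinations a k b l)"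
proof -
  have "inj_on ((\<lambda>x. x mod (k * l)) \<circ> (\<lambda>(i, j). a * i + b * j)) ({..<k} \<times> {..<l})"
    using inj_on_bounded_combination_mod[OF assms] by (simp add: case_prod_unfold o_def)
  then show "inj_on (\<lambda>(i, j). a * i + b * j) ({..<k} \<times> {..<l})"
    and "inj_on (\<lambda>x. x mod (k * l)) (bounded_combinations a k b l)"
    unfolding bounded_combinations_def by (fact inj_on_imageI2, fact inj_on_imageI)
qed

lemma mod_image_bounded_combinations:
  fixes a b k l :: nat
  assumes "coprime a k" "k dvd b" "coprime b l" "l dvd a" "k > 0" "l > 0"
  shows "(\<lambda>x. x mod (k * l)) ` bounded_combinations a k b l = {..<k * l}"
proof (rule card_subset_eq)
  show "(\<lambda>x. x mod (k * l)) ` bounded_combinations a k b l \<subseteq> {..<k * l}"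
    using assms(5,6) by auto
  have "card ((\<lambda>x. x mod (k * l)) ` bounded_combinations a k b l) = card (bounded_combinations a k b l)"
    using inj_on_mod_bounded_combinations[OF assms(1-4)] by (rule card_image)
  also have "\<dots> = k * l"
    unfolding bounded_combinations_def
    using card_image[OF inj_on_bounded_combination[OF assms(1-4)]] by simp
  finally show "card ((\<lambda>x. x mod (k * l)) ` bounded_combinations a k b l) = card {..<k * l}"
    by simp
qed simp

lemma finite_bounded_combinations: "finite (bounded_combinations a k b l)"
  unfolding bounded_combinations_def by simp

lemma bounded_combinations_le: "x \<in> bounded_combinations a k b l \<Longrightarrow> x \<le> a * k + b * l"
  unfolding bounded_combinations_def by (auto intro: add_mono)

lemma plus_multiples_bounded_combinations_generating_fps:
  fixes a b k l :: nat
  assumes "coprime a k" "k dvd b" "coprime b l" "l dvd a" "k > 0" "l > 0"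
  shows "(1 - fps_X ^ (k * l)) * (1 - fps_X ^ a) * (1 - fps_X ^ b)
           * (indicator_fps (plus_multiples (bounded_combinations a k b l) (k * l)) :: 'r :: comm_ring_1 fps)
         = (1 - fps_X ^ (a * k)) * (1 - fps_X ^ (b * l))"
proof -
  define I :: "'r fps" where "I = indicator_fps (plus_multiples (bounded_combinations a k b l) (k * l))"
  have "(1 - fps_X ^ (k * l)) * I = (\<Sum>x\<in>bounded_combinations a k b l. fps_X ^ x)"
    unfolding I_def using assms
    by (intro one_minus_X_power_mult_indicator_plus_multiples
        finite_bounded_combinations inj_on_mod_bounded_combinations) simp_all
  also have "\<dots> = (\<Sum>i<k. fps_X ^ (a * i)) * (\<Sum>j<l. fps_X ^ (b * j))"
    unfolding bounded_combinations_def
    by (subst sum.reindex[OF inj_on_bounded_combination[OF assms(1-4)]])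
      (simp add: sum_product sum.cartesian_product power_add case_prod_unfold)
  finally have box: "(1 - fps_X ^ (k * l)) * I = (\<Sum>i<k. fps_X ^ (a * i)) * (\<Sum>j<l. fps_X ^ (b * j))" .
  have "(1 - fps_X ^ (k * l)) * (1 - fps_X ^ a) * (1 - fps_X ^ b) * I
          = (1 - fps_X ^ a) * (1 - fps_X ^ b) * ((1 - fps_X ^ (k * l)) * I)"
    by (simp only: ac_simps)
  also have "\<dots> = ((1 - fps_X ^ a) * (\<Sum>i<k. fps_X ^ (a * i))) * ((1 - fps_X ^ b) * (\<Sum>j<l. fps_X ^ (b * j)))"
    unfolding box by (simp only: ac_simps)
  also have "\<dots> = (1 - fps_X ^ (a * k)) * (1 - fps_X ^ (b * l))"
    unfolding geometric_fps_X_power ..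
  finally show ?thesis
    unfolding I_def .
qed

lemma plus_multiples_bounded_combinations_cofinite:
  fixes a b k l :: nat
  assumes "coprime a k" "k dvd b" "coprime b l" "l dvd a" "k > 0" "l > 0"
    and "a * k + b * l \<le> s"
  shows "s \<in> plus_multiples (bounded_combinations a k b l) (k * l)"
proof -
  have "s mod (k * l) \<in> (\<lambda>x. x mod (k * l)) ` bounded_combinations a k b l"
    using assms(5,6) by (simp add: mod_image_bounded_combinations[OF assms(1-6)])
  then obtain x where "x \<in> bounded_combinations a k b l" "x mod (k * l) = s mod (k * l)"
    by auto
  moreover have "x \<le> s"
    using bounded_combinations_le[OF \<open>x \<in> _\<close>] assms(7) by linarith
  ultimately show ?thesis
    by (meson mem_plus_multiplesI)
qed

lemma zero_mem_plus_multiples_bounded_combinations: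
  "k > 0 \<Longrightarrow> l > 0 \<Longrightarrow> 0 \<in> plus_multiples (bounded_combinations a k b l) c"
  using subset_plus_multiples unfolding bounded_combinations_def by force


subsection \<open>Roots of unity and cyclotomic polynomials\<close>

lemma cis_root_of_unity_power_eq_1_iff:
  assumes "N > 0"
  shows "cis (2 * pi * real k / real N) ^ M = 1 \<longleftrightarrow> N dvd k * M"
proof -
  have "cis (2 * pi * real k / real N) ^ M = cis (2 * pi * real (k * M) / real N)"
    unfolding Complex.DeMoivre by (rule arg_cong[where f = cis]) (simp add: field_simps)
  also have "\<dots> = exp (2 * of_real pi * \<i> * of_nat (k * M) / of_nat N)"
    by (simp add: cis_conv_exp field_simps)
  finally show ?thesis
    using complex_root_unity_eq_1[of N "k * M"] assms by simp
qed

lemma monom_minus_one_eq_prod_roots_of_unity: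
  assumes "M > 0"
  shows "(monom 1 M - 1 :: complex poly) = (\<Prod>z\<in>{z. z ^ M = 1}. [:-z, 1:])"
proof -
  define P where "P = (monom 1 M - 1 :: complex poly)"
  have roots: "poly P z = 0 \<longleftrightarrow> z ^ M = 1" for z
    by (simp add: P_def poly_monom)
  have "lead_coeff (-1 + monom (1 :: complex) M) = 1"
    using assms by (subst lead_coeff_add_le) (simp_all add: degree_monom_eq)
  then have monic: "lead_coeff P = 1"
    by (simp add: P_def)
  have "rsquarefree P"
    unfolding rsquarefree_roots
  proof (intro allI notI)
    fix z assume "poly P z = 0 \<and> poly (pderiv P) z = 0"
    then have "z ^ M = 1" "of_nat M * z ^ (M - 1) = 0"
      by (auto simp: roots P_def pderiv_diff pderiv_monom poly_monom)
    then show False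
      using assms by (cases "z = 0") (auto simp: zero_power)
  qed
  then have "P = (\<Prod>z | poly P z = 0. [:-z, 1:])"
    using complex_poly_decompose_rsquarefree monic by (metis smult_1_left)
  moreover have "{z. poly P z = 0} = {z. z ^ M = 1}"
    using roots by blast
  ultimately show ?thesis
    unfolding P_def by metis
qed

lemma monom_minus_one_eq_prod_cis:
  assumes "N > 0" "d dvd N"
  shows "(monom 1 (N div d) - 1 :: complex poly)
           = (\<Prod>k\<in>{k. k < N \<and> d dvd k}. [:-cis (2 * pi * real k / real N), 1:])"
proof -
  define M where "M = N div d"
  define h where "h = (\<lambda>k::nat. cis (2 * pi * real k / real N))"
  have N: "N = d * M" "M > 0"
    using assms by (auto simp: M_def)
  have roots_N: "bij_betw h {..<N} {z. z ^ N = 1}"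
    unfolding h_def by (rule Complex.bij_betw_roots_unity[OF assms(1)])
  have power_M: "h k ^ M = 1 \<longleftrightarrow> d dvd k" for k
    using cis_root_of_unity_power_eq_1_iff[OF assms(1), of k M] N unfolding h_def by simp
  have "h ` {k. k < N \<and> d dvd k} = {z. z ^ M = 1}"
  proof (intro equalityI subsetI)
    fix z :: complex assume "z \<in> {z. z ^ M = 1}"
    then have "z ^ N = 1"
      by (simp add: N(1) mult.commute power_mult)
    then obtain k where "k < N" "z = h k"
      using bij_betw_imp_surj_on[OF roots_N] by force
    with \<open>z \<in> {z. z ^ M = 1}\<close> show "z \<in> h ` {k. k < N \<and> d dvd k}"
      using power_M by auto
  qed (use power_M in auto)
  moreover have "inj_on h {k. k < N \<and> d dvd k}"
    using bij_betw_imp_inj_on[OF roots_N] by (rule inj_on_subset) auto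
  ultimately have "bij_betw h {k. k < N \<and> d dvd k} {z. z ^ M = 1}"
    by (simp add: bij_betw_def)
  then have "(\<Prod>k\<in>{k. k < N \<and> d dvd k}. [:-h k, 1:]) = (\<Prod>z\<in>{z. z ^ M = 1}. [:-z, 1:])"
    by (rule prod.reindex_bij_betw)
  then show ?thesis
    using monom_minus_one_eq_prod_roots_of_unity[OF N(2)] unfolding M_def h_def by simp
qed

lemma cyclotomic_eq_prod_coprime:
  assumes "N > 1"
  shows "cyclotomic N = (\<Prod>k\<in>{k. k < N \<and> coprime k N}. [:-cis (2 * pi * real k / real N), 1:])"
proof -
  have "k \<noteq> 0 \<and> k \<noteq> N" if "coprime k N" for k
    using that assms by (cases "k = 0"; cases "k = N") auto
  then have "{k \<in> {1..N}. coprime k N} = {k. k < N \<and> coprime k N}"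
    by fastforce
  then show ?thesis
    unfolding cyclotomic_def by simp
qed

lemma coprime_prime_right_iff: "prime (p :: nat) \<Longrightarrow> coprime k p \<longleftrightarrow> \<not> p dvd k"
  by (metis coprime_commute coprime_imp_gcd_eq_1 gcd_proj1_if_dvd_nat not_prime_1 prime_imp_coprime_nat)

lemma cyclotomic_two_primes_identity:
  fixes p q m n :: nat
  assumes "prime p" "prime q" "p \<noteq> q" "m > 0" "n > 0"
  defines "N \<equiv> p ^ m * q ^ n"
  shows "cyclotomic N * (monom 1 (N div q) - 1) * (monom 1 (N div p) - 1)
           = (monom 1 N - 1) * (monom 1 (N div (p * q)) - 1)"
proof -
  define f where "f = (\<lambda>k. [:-cis (2 * pi * real k / real N), 1:])"
  define R where "R = (\<lambda>P. prod f {k. k < N \<and> P k})"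
  have "p > 1" "q > 1"
    using assms(1,2) prime_gt_1_nat by auto
  have "1 < p ^ m"
    using \<open>p > 1\<close> assms(4) by (rule one_less_power)
  moreover have "p ^ m \<le> N"
    unfolding N_def using \<open>q > 1\<close> by simp
  ultimately have "N > 1"
    by linarith
  have "p dvd N" "q dvd N" "p * q dvd N"
    unfolding N_def using assms(4,5) by (simp_all add: dvd_power mult_dvd_mono)
  have pq_dvd_iff: "p * q dvd k \<longleftrightarrow> p dvd k \<and> q dvd k" for k
    using assms(1-3) by (auto intro: divides_mult primes_coprime dvd_mult_left dvd_mult_right)
  have "coprime k N \<longleftrightarrow> \<not> p dvd k \<and> \<not> q dvd k" for k
    unfolding N_def using assms by (simp add: coprime_prime_right_iff)
  then have cyc: "cyclotomic N = R (\<lambda>k. \<not> p dvd k \<and> \<not> q dvd k)"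
    unfolding R_def f_def using cyclotomic_eq_prod_coprime[OF \<open>N > 1\<close>] by simp
  have R_div: "monom 1 (N div d) - 1 = R (\<lambda>k. d dvd k)" if "d dvd N" for d
    unfolding R_def f_def using monom_minus_one_eq_prod_cis[OF _ that] \<open>N > 1\<close> by simp
  have inter: "R (\<lambda>k. q dvd k) * R (\<lambda>k. p dvd k) = R (\<lambda>k. p dvd k \<or> q dvd k) * R (\<lambda>k. p dvd k \<and> q dvd k)"
  proof -
    have split: "prod f ({k. k < N \<and> q dvd k} \<union> {k. k < N \<and> p dvd k}) * prod f ({k. k < N \<and> q dvd k} \<inter> {k. k < N \<and> p dvd k})
            = prod f {k. k < N \<and> q dvd k} * prod f {k. k < N \<and> p dvd k}"
      by (rule prod.union_inter) auto
    have "{k. k < N \<and> q dvd k} \<union> {k. k < N \<and> p dvd k} = {k. k < N \<and> (p dvd k \<or> q dvd k)}"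
      "{k. k < N \<and> q dvd k} \<inter> {k. k < N \<and> p dvd k} = {k. k < N \<and> p dvd k \<and> q dvd k}"
      by auto
    with split show ?thesis
      unfolding R_def by (simp only:)
  qed
  have disj: "R (\<lambda>k. \<not> p dvd k \<and> \<not> q dvd k) * R (\<lambda>k. p dvd k \<or> q dvd k) = R (\<lambda>k. True)"
  proof -
    have split: "prod f ({k. k < N \<and> \<not> p dvd k \<and> \<not> q dvd k} \<union> {k. k < N \<and> (p dvd k \<or> q dvd k)})
            = prod f {k. k < N \<and> \<not> p dvd k \<and> \<not> q dvd k} * prod f {k. k < N \<and> (p dvd k \<or> q dvd k)}"
      by (rule prod.union_disjoint) auto
    have "{k. k < N \<and> \<not> p dvd k \<and> \<not> q dvd k} \<union> {k. k < N \<and> (p dvd k \<or> q dvd k)} = {k. k < N \<and> True}"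
      by auto
    with split show ?thesis
      unfolding R_def by (simp only:)
  qed
  have "cyclotomic N * (monom 1 (N div q) - 1) * (monom 1 (N div p) - 1)
          = R (\<lambda>k. \<not> p dvd k \<and> \<not> q dvd k) * (R (\<lambda>k. q dvd k) * R (\<lambda>k. p dvd k))"
    using cyc R_div[OF \<open>q dvd N\<close>] R_div[OF \<open>p dvd N\<close>] by (simp only: mult.assoc)
  also have "\<dots> = R (\<lambda>k. \<not> p dvd k \<and> \<not> q dvd k) * R (\<lambda>k. p dvd k \<or> q dvd k) * R (\<lambda>k. p dvd k \<and> q dvd k)"
    unfolding inter by (simp only: mult.assoc)
  also have "\<dots> = R (\<lambda>k. True) * R (\<lambda>k. p dvd k \<and> q dvd k)"
    unfolding disj ..
  also have "\<dots> = (monom 1 N - 1) * (monom 1 (N div (p * q)) - 1)"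
    using R_div[of 1] R_div[OF \<open>p * q dvd N\<close>] pq_dvd_iff by simp
  finally show ?thesis .
qed


lemma prime_powers_box_conditions:
  fixes p q m n :: nat
  assumes "prime p" "prime q" "p \<noteq> q"
  shows "coprime (p ^ m) (q ^ (n - 1))" "q ^ (n - 1) dvd q ^ n"
    and "coprime (q ^ n) (p ^ (m - 1))" "p ^ (m - 1) dvd p ^ m"
    and "q ^ (n - 1) > 0" "p ^ (m - 1) > 0"
proof -
  have "coprime p q" "p > 0" "q > 0"
    using assms by (simp_all add: primes_coprime prime_gt_0_nat)
  then show "coprime (p ^ m) (q ^ (n - 1))" "q ^ (n - 1) dvd q ^ n"
    and "coprime (q ^ n) (p ^ (m - 1))" "p ^ (m - 1) dvd p ^ m"
    and "q ^ (n - 1) > 0" "p ^ (m - 1) > 0"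
    by (simp_all add: le_imp_power_dvd coprime_commute)
qed

lemma cyclotomic_mult_indicator_fps:
  fixes p q m n :: nat
  assumes "prime p" "prime q" "p \<noteq> q" "m > 0" "n > 0"
  defines "a \<equiv> p ^ m" and "b \<equiv> q ^ n" and "k \<equiv> q ^ (n - 1)" and "l \<equiv> p ^ (m - 1)"
  shows "fps_of_poly (cyclotomic (a * b)) * indicator_fps (plus_multiples (bounded_combinations a k b l) (k * l))
           = indicator_fps (semigroup_gen a b)"
proof -
  define N where "N = a * b"
  define I_T :: "complex fps" where "I_T = indicator_fps (plus_multiples (bounded_combinations a k b l) (k * l))"
  define I_S :: "complex fps" where "I_S = indicator_fps (semigroup_gen a b)"
  define \<Phi> where "\<Phi> = fps_of_poly (cyclotomic N)"
  have "p > 0" "q > 0" "coprime p q"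
    using assms(1-3) by (simp_all add: primes_coprime prime_gt_0_nat)
  then have pos: "a > 0" "b > 0" and "coprime a b"
    unfolding a_def b_def by simp_all
  have box: "coprime a k" "k dvd b" "coprime b l" "l dvd a" "k > 0" "l > 0"
    unfolding a_def b_def k_def l_def by (rule prime_powers_box_conditions[OF assms(1-3)])+
  have "a = l * p" "b = k * q"
    unfolding a_def b_def k_def l_def using assms(4,5) by (simp_all add: power_eq_if)
  then have "N div q = a * k" "N div p = b * l" "N div (p * q) = k * l"
    unfolding N_def using \<open>p > 0\<close> \<open>q > 0\<close> by (simp_all add: ac_simps)
  then have cyc: "\<Phi> * (1 - fps_X ^ (a * k)) * (1 - fps_X ^ (b * l)) = (1 - fps_X ^ N) * (1 - fps_X ^ (k * l))"
    using arg_cong[OF cyclotomic_two_primes_identity[OF assms(1-5)], of fps_of_poly]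
    by (simp add: \<Phi>_def N_def a_def b_def fps_of_poly_mult fps_of_poly_diff fps_of_poly_monom' algebra_simps)
  define D :: "complex fps" where "D = (1 - fps_X ^ (k * l)) * (1 - fps_X ^ a) * (1 - fps_X ^ b)"
  have "D \<noteq> 0"
    unfolding D_def using pos box(5,6) by (intro no_zero_divisors one_minus_X_power_neq_zero) simp_all
  have "\<Phi> * I_T * D = \<Phi> * (1 - fps_X ^ (a * k)) * (1 - fps_X ^ (b * l))"
    using plus_multiples_bounded_combinations_generating_fps[OF box, where 'r = complex]
    unfolding D_def I_T_def by (simp add: ac_simps)
  also have "\<dots> = (1 - fps_X ^ (a * b)) * (1 - fps_X ^ (k * l))"
    unfolding cyc N_def ..
  also have "\<dots> = I_S * D"
    using semigroup_gen_generating_fps[OF pos(1,2) \<open>coprime a b\<close>, where 'a = complex]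
    unfolding D_def I_S_def by (simp add: ac_simps)
  finally show ?thesis
    using \<open>D \<noteq> 0\<close> unfolding \<Phi>_def N_def I_T_def I_S_def by simp
qed


subsection \<open>Coefficients of \<open>(1 - x)\<close> times an indicator series\<close>

lemma poly_one_minus_X_mult_indicator_fps:
  assumes "\<And>s. B \<le> s \<Longrightarrow> s \<in> T"
  obtains Q :: "'a :: comm_ring_1 poly" where "fps_of_poly Q = (1 - fps_X) * indicator_fps T"
proof
  have "((1 - fps_X) * indicator_fps T :: 'a fps) $ s = 0" if "Suc B \<le> s" for s
    using that assms by (simp add: one_minus_X_mult_indicator_fps_nth)
  then show "fps_of_poly (truncate_fps (Suc B) ((1 - fps_X) * indicator_fps T))
              = (1 - fps_X) * (indicator_fps T :: 'a fps)"
    by (intro fps_ext) (auto simp: not_less)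
qed

context
  fixes T :: "nat set" and Q :: "int poly"
  assumes Q: "fps_of_poly Q = (1 - fps_X) * indicator_fps T"
begin

lemma coeff_one_minus_X_mult_indicator:
  "coeff Q s = (if s \<in> T then 1 else 0) - (if 0 < s \<and> s - 1 \<in> T then 1 else 0)"
  using arg_cong[OF Q, of "\<lambda>F. F $ s"] by (simp add: one_minus_X_mult_indicator_fps_nth)

lemma coeff_one_minus_X_mult_indicator_cases: "coeff Q s = 0 \<or> coeff Q s = 1 \<or> coeff Q s = -1"
  by (simp add: coeff_one_minus_X_mult_indicator)

lemma mem_iff_if_coeffs_vanish:
  assumes "i \<le> j" "\<And>k. i < k \<Longrightarrow> k \<le> j \<Longrightarrow> coeff Q k = 0"
  shows "j \<in> T \<longleftrightarrow> i \<in> T"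
  using assms
proof (induction j rule: dec_induct)
  case (step j)
  then have "coeff Q (Suc j) = 0" and "j \<in> T \<longleftrightarrow> i \<in> T"
    by simp_all
  then show ?case
    by (auto simp: coeff_one_minus_X_mult_indicator split: if_splits)
qed simp

lemma coeff_one_minus_X_mult_indicator_alternates:
  assumes "i < j" "coeff Q i \<noteq> 0" "coeff Q j \<noteq> 0" "\<And>k. i < k \<Longrightarrow> k < j \<Longrightarrow> coeff Q k = 0"
  shows "coeff Q j = - coeff Q i"
proof -
  have "j - 1 \<in> T \<longleftrightarrow> i \<in> T"
    using assms(1,4) by (intro mem_iff_if_coeffs_vanish) auto
  then show ?thesis
    using assms(1-3) by (auto simp: coeff_one_minus_X_mult_indicator split: if_splits)
qed

lemma lead_coeff_one_minus_X_mult_indicator: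
  assumes "0 \<in> T" "\<And>s. B \<le> s \<Longrightarrow> s \<in> T"
  shows "lead_coeff Q = 1"
proof -
  have "Q \<noteq> 0"
    using coeff_one_minus_X_mult_indicator[of 0] assms(1) by auto
  have "degree Q + B \<in> T \<longleftrightarrow> degree Q \<in> T"
    by (intro mem_iff_if_coeffs_vanish) (auto intro: coeff_eq_0)
  then have "degree Q \<in> T"
    using assms(2) by simp
  with \<open>Q \<noteq> 0\<close> show ?thesis
    using coeff_one_minus_X_mult_indicator[of "degree Q"] by (auto split: if_splits)
qed


end

theorem theorem4:
  fixes p q m n :: nat
  assumes "prime p" and "prime q" and "p \<noteq> q" and "m > 0" and "n > 0"
  shows "\<exists>Q :: int poly.
           fps_of_poly (cyclotomic (p ^ m * q ^ n) * map_poly of_int Q)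
             = Abs_fps (\<lambda>k. of_int (fps_nth (semigroup_poly_fps (semigroup_gen (p ^ m) (q ^ n))) k))
         \<and> lead_coeff Q = 1
         \<and> coeff Q 0 = 1
         \<and> (\<forall>i. coeff Q i \<noteq> 0 \<longrightarrow> coeff Q i = 1 \<or> coeff Q i = -1)
         \<and> (\<forall>i j. i < j \<and> coeff Q i \<noteq> 0 \<and> coeff Q j \<noteq> 0
                  \<and> (\<forall>k. i < k \<and> k < j \<longrightarrow> coeff Q k = 0)
                  \<longrightarrow> coeff Q j = - coeff Q i)"
proof -
  define a b k l where "a = p ^ m" and "b = q ^ n" and "k = q ^ (n - 1)" and "l = p ^ (m - 1)"
  define T where "T = plus_multiples (bounded_combinations a k b l) (k * l)"
  have box: "coprime a k" "k dvd b" "coprime b l" "l dvd a" "k > 0" "l > 0"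
    unfolding a_def b_def k_def l_def by (rule prime_powers_box_conditions[OF assms(1-3)])+
  have cofinite: "s \<in> T" if "a * k + b * l \<le> s" for s
    unfolding T_def using box that by (rule plus_multiples_bounded_combinations_cofinite)
  then obtain Q :: "int poly" where Q: "fps_of_poly Q = (1 - fps_X) * indicator_fps T"
    using poly_one_minus_X_mult_indicator_fps by blast
  have "0 \<in> T"
    unfolding T_def using box(5,6) by (rule zero_mem_plus_multiples_bounded_combinations)
  have "fps_of_poly (cyclotomic (p ^ m * q ^ n) * map_poly of_int Q)
          = (1 - fps_X) * (fps_of_poly (cyclotomic (a * b)) * indicator_fps T)"
    by (simp add: fps_of_poly_mult fps_of_poly_map_poly_of_int Q of_int_one_minus_X_mult_indicator_fps
        a_def b_def)
  also have "\<dots> = Abs_fps (\<lambda>k. of_int (semigroup_poly_fps (semigroup_gen a b) $ k))"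
    unfolding T_def a_def b_def k_def l_def cyclotomic_mult_indicator_fps[OF assms]
    by (simp add: semigroup_poly_fps_def indicator_fps_def[symmetric] of_int_one_minus_X_mult_indicator_fps)
  finally show ?thesis
    using coeff_one_minus_X_mult_indicator[OF Q, of 0] \<open>0 \<in> T\<close>
      lead_coeff_one_minus_X_mult_indicator[OF Q \<open>0 \<in> T\<close> cofinite]
      coeff_one_minus_X_mult_indicator_cases[OF Q] coeff_one_minus_X_mult_indicator_alternates[OF Q]
    unfolding a_def b_def by (intro exI[of _ Q]) auto
qed

end
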